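(* Let $\Gamma$ be a 3-colex and $c\in\{r,b,g,y\}$. If $\overline S$ is an $X$-type stabilizer of the color code on $\Gamma$, then $\pi_c(\overline S)$ is an $X$-stabilizer of the 3D toric code on $\Gamma^{*\setminus c}$. Conversely, for every $X$-stabilizer $S$ of the toric code on $\Gamma^{*\setminus c}$ there exists an $X$-stabilizer $\overline S$ of the color code such that $\pi_c(\overline S)=S$ and $\pi_{c'}(\overline S)=I$ for every color $c'\neq c$.
   Context: Colors are $\{r,b,g,y\}$. A 3-colex $\Gamma$ is a 3-dimensional cell complex without boundary in which every vertex is 4-valent and lies in exactly four 3-cells, and whose 3-cells are properly 4-colored: every face lies in exactly two 3-cells, which have different colors. The dual complex $\Gamma^*$ has an $i$-cell for every $(3-i)$-cell of $\Gamma$, with incidences reversed; every 3-cell of $\Gamma^*$ is a tetrahedron. A vertex of $\Gamma^*$ is given the color of the corresponding 3-cell of $\Gamma$, so the four vertices of each tetrahedron have distinct colors. A face of $\Gamma^*$ is an $x$-face if none of its vertices has color $x$; each tetrahedron $\nu$ has a unique $x$-face $\pi_x(\nu)$. The 3D color code on $\Gamma$ has one qubit per tetrahedron of $\Gamma^*$ and $X$-stabilizer generators $B^X_v=\prod_{\nu\ni v}X_\nu$ for vertices $v$ of $\Gamma^*$; its $X$-stabilizers are the products of these. For a color $x$, the minor complex $\Gamma^{*\setminus x}$ is obtained from $\Gamma^*$ by deleting all vertices of color $x$ together with all edges and faces incident to them; its faces are the $x$-faces of $\Gamma^*$ and its 3-cells are obtained by merging, for each $x$-vertex, the tetrahedra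 containing it. The 3D toric code on $\Gamma^{*\setminus x}$ has qubits on faces and $X$-stabilizer generators $\prod_{f\in\partial\mu}X_f$ for 3-cells $\mu$; its $X$-stabilizers are products of these. Operators are mapped by $\pi_x(\prod_{\nu\in\Omega}X_\nu)=\prod_{\nu\in\Omega}X_{\pi_x(\nu)}$ (with $X_f^2=I$). *)

theory Defs
  imports Main
begin

datatype color = Red | Blue | Green | Yellow

text \<open>
  Combinatorial data of the dual complex \<Gamma>* of a 3-colex:
  V  : vertices of \<Gamma>* (= 3-cells of \<Gamma>), coloured by col;
  T  : tetrahedra of \<Gamma>* (= vertices of \<Gamma>);
  vert \<nu> c : the vertex of colour c of the tetrahedron \<nu>;
  F  : faces (triangles) of \<Gamma>* (= edges of \<Gamma>), with vertex sets fverts;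
  face \<nu> c : the c-face \<pi>_c(\<nu>) of \<nu> (the face of \<nu> missing colour c).
\<close>

definition tverts :: "('t \<Rightarrow> color \<Rightarrow> 'v) \<Rightarrow> 't \<Rightarrow> 'v set" where
  "tverts vert \<nu> = range (vert \<nu>)"

definition colex_dual ::
  "'v set \<Rightarrow> ('v \<Rightarrow> color) \<Rightarrow> 't set \<Rightarrow> ('t \<Rightarrow> color \<Rightarrow> 'v)
   \<Rightarrow> 'f set \<Rightarrow> ('f \<Rightarrow> 'v set) \<Rightarrow> ('t \<Rightarrow> color \<Rightarrow> 'f) \<Rightarrow> bool" where
  "colex_dual V col T vert F fverts face \<longleftrightarrow>
     finite V \<and> finite T \<and> finite F \<and>
     (\<forall>\<nu>\<in>T. \<forall>c. vert \<nu> c \<in> V \<and> col (vert \<nu> c) = c) \<and>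
     (\<forall>v\<in>V. \<exists>\<nu>\<in>T. v \<in> tverts vert \<nu>) \<and>
     (\<forall>\<nu>\<in>T. \<forall>c. face \<nu> c \<in> F \<and> fverts (face \<nu> c) = vert \<nu> ` (- {c})) \<and>
     (\<forall>f\<in>F. \<exists>\<nu>\<in>T. \<exists>c. face \<nu> c = f) \<and>
     (\<forall>f\<in>F. card {\<nu>\<in>T. \<exists>c. face \<nu> c = f} = 2)"

text \<open>X-type Pauli operators are represented by their supports (sets of qubits);
  multiplication is symmetric difference, so a product of generators has support
  the set of qubits hit an odd number of times.\<close>

definition cc_Xstab :: "'v set \<Rightarrow> 't set \<Rightarrow> ('t \<Rightarrow> color \<Rightarrow> 'v) \<Rightarrow> 't set \<Rightarrow> bool" where
  "cc_Xstab V T vert S \<longleftrightarrow>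
     (\<exists>G \<subseteq> V. S = {\<nu>\<in>T. odd (card {v\<in>G. v \<in> tverts vert \<nu>})})"

definition proj :: "('t \<Rightarrow> color \<Rightarrow> 'f) \<Rightarrow> color \<Rightarrow> 't set \<Rightarrow> 'f set" where
  "proj face x \<Omega> = {f. odd (card {\<nu>\<in>\<Omega>. face \<nu> x = f})}"

text \<open>Boundary (mod 2) of the 3-cell of the minor complex obtained by merging
  the tetrahedra around the x-vertex v: its faces are the x-faces of those tetrahedra.\<close>
definition minor_bd :: "'t set \<Rightarrow> ('t \<Rightarrow> color \<Rightarrow> 'v) \<Rightarrow> ('t \<Rightarrow> color \<Rightarrow> 'f)
     \<Rightarrow> color \<Rightarrow> 'v \<Rightarrow> 'f set" where
  "minor_bd T vert face x v =
     {f. odd (card {\<nu>\<in>T. v \<in> tverts vert \<nu> \<and> face \<nu> x = f})}"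

definition tc_Xstab :: "'v set \<Rightarrow> ('v \<Rightarrow> color) \<Rightarrow> 't set \<Rightarrow> ('t \<Rightarrow> color \<Rightarrow> 'v)
     \<Rightarrow> ('t \<Rightarrow> color \<Rightarrow> 'f) \<Rightarrow> color \<Rightarrow> 'f set \<Rightarrow> bool" where
  "tc_Xstab V col T vert face x S \<longleftrightarrow>
     (\<exists>M \<subseteq> {v\<in>V. col v = x}.
        S = {f. odd (card {v\<in>M. f \<in> minor_bd T vert face x v})})"

end

theory Submission
  imports Defs
begin

text \<open>
  A set G of vertices of \<Gamma>* gives the colour-code stabilizer supported on the tetrahedra
  containing an odd number of vertices of G; a set M of c-vertices gives the toric-code
  stabilizer supported on the faces bounding an odd number of merged cells of M. Counting
  the pairs (v, \<nu>) with v \<in> G, v \<in> \<nu> and \<pi>_c(\<nu>) = f in two ways modulo 2 shows that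
  \<pi>_c sends the stabilizer of G to the toric stabilizer of the c-vertices of G: a vertex of
  another colour lying on the c-face f lies on both tetrahedra sharing f, so it contributes
  an even number of pairs. Conversely the toric stabilizer of M lifts to the colour-code
  stabilizer of M itself, which every \<pi>_c' with c' \<noteq> c kills since M has no c'-vertices.
\<close>

definition vertex_op :: "'t set \<Rightarrow> ('t \<Rightarrow> color \<Rightarrow> 'v) \<Rightarrow> 'v set \<Rightarrow> 't set" where
  "vertex_op T vert G = {\<nu>\<in>T. odd (card {v\<in>G. v \<in> tverts vert \<nu>})}"

definition cell_op :: "'t set \<Rightarrow> ('t \<Rightarrow> color \<Rightarrow> 'v) \<Rightarrow> ('t \<Rightarrow> color \<Rightarrow> 'f)
     \<Rightarrow> color \<Rightarrow> 'v set \<Rightarrow> 'f set" where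
  "cell_op T vert face x M = {f. odd (card {v\<in>M. f \<in> minor_bd T vert face x v})}"

lemma cc_Xstab_iff_vertex_op: "cc_Xstab V T vert S \<longleftrightarrow> (\<exists>G \<subseteq> V. S = vertex_op T vert G)"
  by (simp add: cc_Xstab_def vertex_op_def)

lemma tc_Xstab_iff_cell_op:
  "tc_Xstab V col T vert face x S \<longleftrightarrow> (\<exists>M \<subseteq> {v\<in>V. col v = x}. S = cell_op T vert face x M)"
  by (simp add: tc_Xstab_def cell_op_def)

lemma cell_op_empty [simp]: "cell_op T vert face x {} = {}"
  by (simp add: cell_op_def)

lemma odd_card_odd_fibres_swap:
  assumes "finite A" "finite B"
  shows "odd (card {x\<in>A. odd (card {y\<in>B. R x y})})
     \<longleftrightarrow> odd (card {y\<in>B. odd (card {x\<in>A. R x y})})"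
proof -
  have "(\<Sum>x\<in>A. card {y\<in>B. R x y}) = (\<Sum>x\<in>A. \<Sum>y\<in>{y\<in>B. R x y}. 1)"
    by simp
  also have "\<dots> = (\<Sum>y\<in>B. \<Sum>x\<in>{x\<in>A. R x y}. 1)"
    by (rule sum.swap_restrict[OF assms])
  also have "\<dots> = (\<Sum>y\<in>B. card {x\<in>A. R x y})"
    by simp
  finally show ?thesis
    using even_sum_iff[OF assms(1), of "\<lambda>x. card {y\<in>B. R x y}"]
      even_sum_iff[OF assms(2), of "\<lambda>y. card {x\<in>A. R x y}"]
    by simp
qed

lemma colex_dual_face_colour_unique:
  assumes "colex_dual V col T vert F fverts face" "\<nu> \<in> T" "\<mu> \<in> T" "face \<nu> c = face \<mu> d"
  shows "c = d"
proof -
  have colours: "col ` fverts (face \<nu> c) = - {c}" if "\<nu> \<in> T" for \<nu> c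
    using assms(1) that unfolding colex_dual_def by (force simp: image_image)
  have "- {c} = - {d}"
    using colours[OF assms(2), of c] colours[OF assms(3), of d] assms(4) by simp
  then show ?thesis by auto
qed

lemma colex_dual_fverts_face_subset:
  assumes "colex_dual V col T vert F fverts face" "\<nu> \<in> T"
  shows "fverts (face \<nu> c) \<subseteq> tverts vert \<nu>"
  using assms unfolding colex_dual_def tverts_def by auto

text \<open>The tetrahedra counted are either none or both tetrahedra sharing the face f.\<close>
lemma colex_dual_even_card_other_colour:
  assumes dual: "colex_dual V col T vert F fverts face" and "col v \<noteq> x"
  shows "even (card {\<nu>\<in>T. v \<in> tverts vert \<nu> \<and> face \<nu> x = f})"
proof (cases "\<exists>\<nu>\<in>T. v \<in> tverts vert \<nu> \<and> face \<nu> x = f")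
  case False
  then have "{\<nu>\<in>T. v \<in> tverts vert \<nu> \<and> face \<nu> x = f} = {}" by blast
  then show ?thesis by (simp only: card.empty even_zero)
next
  case True
  then obtain \<nu>\<^sub>0 where \<nu>\<^sub>0: "\<nu>\<^sub>0 \<in> T" "v \<in> tverts vert \<nu>\<^sub>0" "face \<nu>\<^sub>0 x = f" by blast
  have "f \<in> F" and "fverts f = vert \<nu>\<^sub>0 ` (- {x})"
    and "v = vert \<nu>\<^sub>0 (col v)"
    using dual \<nu>\<^sub>0 unfolding colex_dual_def tverts_def by auto
  then have "v \<in> fverts f" using \<open>col v \<noteq> x\<close> by auto
  have "{\<nu>\<in>T. v \<in> tverts vert \<nu> \<and> face \<nu> x = f} = {\<nu>\<in>T. \<exists>c. face \<nu> c = f}"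
  proof (intro equalityI subsetI)
    fix \<nu> assume "\<nu> \<in> {\<nu>\<in>T. \<exists>c. face \<nu> c = f}"
    then obtain c where "\<nu> \<in> T" "face \<nu> c = f" by blast
    moreover from this have "c = x"
      using colex_dual_face_colour_unique[OF dual _ \<nu>\<^sub>0(1)] \<nu>\<^sub>0(3) by metis
    ultimately show "\<nu> \<in> {\<nu>\<in>T. v \<in> tverts vert \<nu> \<and> face \<nu> x = f}"
      using colex_dual_fverts_face_subset[OF dual] \<open>v \<in> fverts f\<close> by blast
  qed auto
  then show ?thesis
    using dual \<open>f \<in> F\<close> unfolding colex_dual_def by simp
qed

lemma proj_vertex_op:
  assumes dual: "colex_dual V col T vert F fverts face" and "G \<subseteq> V"
  shows "proj face x (vertex_op T vert G) = cell_op T vert face x {v\<in>G. col v = x}"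
proof -
  have "finite T" "finite G"
    using dual \<open>G \<subseteq> V\<close> finite_subset unfolding colex_dual_def by auto
  have "f \<in> proj face x (vertex_op T vert G) \<longleftrightarrow> f \<in> cell_op T vert face x {v\<in>G. col v = x}"
    for f
  proof -
    let ?R = "\<lambda>\<nu> v. v \<in> tverts vert \<nu> \<and> face \<nu> x = f"
    have "{v\<in>G. ?R \<nu> v} = (if face \<nu> x = f then {v\<in>G. v \<in> tverts vert \<nu>} else {})" for \<nu>
      by auto
    then have "{\<nu>\<in>vertex_op T vert G. face \<nu> x = f} = {\<nu>\<in>T. odd (card {v\<in>G. ?R \<nu> v})}"
      by (auto simp: vertex_op_def)
    moreover have "{v\<in>G. odd (card {\<nu>\<in>T. ?R \<nu> v})}
        = {v\<in>{v\<in>G. col v = x}. f \<in> minor_bd T vert face x v}"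
      using colex_dual_even_card_other_colour[OF dual] by (auto simp: minor_bd_def)
    ultimately show ?thesis
      using odd_card_odd_fibres_swap[OF \<open>finite T\<close> \<open>finite G\<close>, of ?R]
      by (simp add: proj_def cell_op_def)
  qed
  then show ?thesis by blast
qed

theorem corollary3:
  fixes V :: "'v set" and col :: "'v \<Rightarrow> color" and T :: "'t set"
    and vert :: "'t \<Rightarrow> color \<Rightarrow> 'v" and F :: "'f set" and fverts :: "'f \<Rightarrow> 'v set"
    and face :: "'t \<Rightarrow> color \<Rightarrow> 'f" and c :: color
  assumes "colex_dual V col T vert F fverts face"
  shows "(\<forall>Sb. cc_Xstab V T vert Sb \<longrightarrow> tc_Xstab V col T vert face c (proj face c Sb))
       \<and> (\<forall>S. tc_Xstab V col T vert face c S \<longrightarrow>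
            (\<exists>Sb. cc_Xstab V T vert Sb \<and> proj face c Sb = S \<and>
                  (\<forall>c'. c' \<noteq> c \<longrightarrow> proj face c' Sb = {})))"
proof (intro conjI allI impI)
  fix Sb assume "cc_Xstab V T vert Sb"
  then obtain G where G: "G \<subseteq> V" "Sb = vertex_op T vert G"
    unfolding cc_Xstab_iff_vertex_op by blast
  then have "proj face c Sb = cell_op T vert face c {v\<in>G. col v = c}"
    using proj_vertex_op[OF assms G(1)] by simp
  then show "tc_Xstab V col T vert face c (proj face c Sb)"
    unfolding tc_Xstab_iff_cell_op using G(1) by (intro exI[of _ "{v\<in>G. col v = c}"]) auto
next
  fix S assume "tc_Xstab V col T vert face c S"
  then obtain M where M: "M \<subseteq> {v\<in>V. col v = c}" and S: "S = cell_op T vert face c M"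
    unfolding tc_Xstab_iff_cell_op by blast
  have "M \<subseteq> V" using M by blast
  have "{v\<in>M. col v = c'} = (if c' = c then M else {})" for c'
    using M by auto
  then have "proj face c' (vertex_op T vert M) = (if c' = c then S else {})" for c'
    using proj_vertex_op[OF assms \<open>M \<subseteq> V\<close>, of c'] S by simp
  moreover have "cc_Xstab V T vert (vertex_op T vert M)"
    using \<open>M \<subseteq> V\<close> unfolding cc_Xstab_iff_vertex_op by blast
  ultimately show "\<exists>Sb. cc_Xstab V T vert Sb \<and> proj face c Sb = S \<and>
               (\<forall>c'. c' \<noteq> c \<longrightarrow> proj face c' Sb = {})"
    by (intro exI[of _ "vertex_op T vert M"]) simp
qed

end
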